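(* Each of the matroids $Q_6$, $P_6$ and $U_{3,6}$ is an excluded minor for the class $\mathcal{Z}$.
   Context: $\mathcal{Z}$ is the class of matroids $M$ such that for every $e\in E(M)$, $M\backslash e$ or $M/e$ is binary. $P_6$ is the six-element rank-3 matroid whose only non-spanning circuit is a single triangle. $Q_6$ is the six-element rank-3 matroid whose non-spanning circuits are exactly two triangles sharing one element. An excluded minor for a minor-closed class is a matroid not in the class all of whose proper minors are in the class. *)

theory Defs
  imports Main "HOL-Library.Z2"
begin

type_synonym 'a matroid = "'a set \<times> ('a set \<Rightarrow> bool)"

definition matroid :: "'a matroid \<Rightarrow> bool" where
  "matroid M \<longleftrightarrow> (let E = fst M; indep = snd M in
     finite E \<and>
     (\<forall>X. indep X \<longrightarrow> X \<subseteq> E) \<and>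
     indep {} \<and>
     (\<forall>X Y. indep Y \<and> X \<subseteq> Y \<longrightarrow> indep X) \<and>
     (\<forall>X Y. indep X \<and> indep Y \<and> card X < card Y \<longrightarrow> (\<exists>y\<in>Y - X. indep (insert y X))))"

definition basis_of :: "('a set \<Rightarrow> bool) \<Rightarrow> 'a set \<Rightarrow> 'a set \<Rightarrow> bool" where
  "basis_of indep B C \<longleftrightarrow> B \<subseteq> C \<and> indep B \<and> (\<forall>x\<in>C - B. \<not> indep (insert x B))"

definition delete :: "'a matroid \<Rightarrow> 'a set \<Rightarrow> 'a matroid" where
  "delete M D = (fst M - D, \<lambda>X. X \<subseteq> fst M - D \<and> snd M X)"

definition contract :: "'a matroid \<Rightarrow> 'a set \<Rightarrow> 'a matroid" where
  "contract M C = (fst M - C,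
     \<lambda>X. X \<subseteq> fst M - C \<and> (\<exists>B. basis_of (snd M) B (C \<inter> fst M) \<and> snd M (X \<union> B)))"

definition proper_minor :: "'a matroid \<Rightarrow> 'a matroid \<Rightarrow> bool" where
  "proper_minor N M \<longleftrightarrow> (\<exists>C D. C \<subseteq> fst M \<and> D \<subseteq> fst M \<and> C \<inter> D = {} \<and> C \<union> D \<noteq> {} \<and>
      N = contract (delete M D) C)"

definition gf2_lin_indep :: "('a \<Rightarrow> nat \<Rightarrow> bit) \<Rightarrow> 'a set \<Rightarrow> bool" where
  "gf2_lin_indep phi X \<longleftrightarrow>
     (\<forall>c :: 'a \<Rightarrow> bit. (\<forall>i. (\<Sum>x\<in>X. c x * phi x i) = 0) \<longrightarrow> (\<forall>x\<in>X. c x = 0))"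

definition binary :: "'a matroid \<Rightarrow> bool" where
  "binary M \<longleftrightarrow> (\<exists>phi :: 'a \<Rightarrow> nat \<Rightarrow> bit. \<forall>X \<subseteq> fst M. snd M X \<longleftrightarrow> gf2_lin_indep phi X)"

definition in_Z :: "'a matroid \<Rightarrow> bool" where
  "in_Z M \<longleftrightarrow> (\<forall>e\<in>fst M. binary (delete M {e}) \<or> binary (contract M {e}))"

definition excluded_minor_Z :: "'a matroid \<Rightarrow> bool" where
  "excluded_minor_Z M \<longleftrightarrow> matroid M \<and> \<not> in_Z M \<and> (\<forall>N. proper_minor N M \<longrightarrow> in_Z N)"

definition U36 :: "nat matroid" where
  "U36 = ({0..5}, \<lambda>X. X \<subseteq> {0..5} \<and> card X \<le> 3)"

definition P6 :: "nat matroid" where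
  "P6 = ({0..5}, \<lambda>X. X \<subseteq> {0..5} \<and> card X \<le> 3 \<and> X \<noteq> {0,1,2})"

definition Q6 :: "nat matroid" where
  "Q6 = ({0..5}, \<lambda>X. X \<subseteq> {0..5} \<and> card X \<le> 3 \<and> X \<noteq> {0,1,2} \<and> X \<noteq> {2,3,4})"

end

theory Submission
  imports Defs
begin

(* All three are rank-3 paving matroids on six points: the independent sets are the
   sets of at most three elements other than a family T of triangles, any two of
   which share at most one point.

   Deleting two points leaves a four-point restriction with
   a unique circuit (a triangle, or all four points), and a matroid with a unique
   circuit is binary.  A proper minor that only deletes is then, after deleting any
   further element, a deletion of such a binary matroid; a proper minor that
   contracts a nonempty set drops to rank at most one after one more contraction,
   and such matroids are binary.

   For a suitable element e, both M \ e and M / e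
   contain circuits S + x and S + y with {x, y} independent; in a binary
   representation the vectors of a circuit sum to zero, forcing x and y to have
   equal vectors, which is impossible. *)

(* Keep GF(2) products and sums as ring operations rather than bitwise and/xor. *)
declare mult_bit_eq_and [simp del] add_bit_eq_xor [simp del]

lemma bit_cases: "(b::bit) = 0 \<or> b = 1"
  by (cases "b = 0") auto

lemma bit_add_self [simp]: "(b::bit) + b = 0"
  using bit_cases[of b] by auto

lemma gf2_dependent_subset:
  assumes "finite X" "A \<subseteq> X" "A \<noteq> {}" "\<And>i. (\<Sum>z\<in>A. phi z i) = 0"
  shows "\<not> gf2_lin_indep phi X"
proof
  assume indep: "gf2_lin_indep phi X"
  let ?c = "\<lambda>z. if z \<in> A then (1::bit) else 0"
  have "(\<Sum>x\<in>X. ?c x * phi x i) = (\<Sum>x\<in>X. if x \<in> A then phi x i else 0)" for i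
    by (rule sum.cong) auto
  also have "\<dots> i = (\<Sum>z\<in>A. phi z i)" for i
    using sum.inter_restrict[OF assms(1), of "\<lambda>z. phi z i" A] assms(2)
    by (simp add: Int_absorb1)
  finally have "(\<Sum>x\<in>X. ?c x * phi x i) = (\<Sum>z\<in>A. phi z i)" for i .
  then have "\<forall>x\<in>X. ?c x = 0"
    using indep assms(4) unfolding gf2_lin_indep_def by presburger
  with assms(2,3) show False by (metis one_neq_zero subset_iff ex_in_conv)
qed

definition circuit :: "'a matroid \<Rightarrow> 'a set \<Rightarrow> bool" where
  "circuit M C \<longleftrightarrow> C \<subseteq> fst M \<and> \<not> snd M C \<and> (\<forall>x\<in>C. snd M (C - {x}))"

(* Over GF(2) the only nontrivial relation on a minimally dependent family is the
   all-ones one, so the vectors of a circuit sum to zero. *)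
lemma gf2_circuit_sum_zero:
  assumes fin: "finite C" and dep: "\<not> gf2_lin_indep phi C"
    and minimal: "\<And>x. x \<in> C \<Longrightarrow> gf2_lin_indep phi (C - {x})"
  shows "(\<Sum>x\<in>C. phi x i) = 0"
proof -
  obtain k where rel: "\<And>i. (\<Sum>x\<in>C. k x * phi x i) = 0" and nz: "\<exists>x\<in>C. k x \<noteq> 0"
    using dep unfolding gf2_lin_indep_def by blast
  have "k x = 1" if x: "x \<in> C" for x
  proof (rule ccontr)
    assume "k x \<noteq> 1"
    then have kx: "k x = 0" using bit_cases by blast
    have "(\<Sum>y\<in>C - {x}. k y * phi y i) = (\<Sum>y\<in>C. k y * phi y i)" for i
      using sum.remove[OF fin x, of "\<lambda>y. k y * phi y i"] kx by simp
    then have "\<forall>y\<in>C - {x}. k y = 0"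
      using minimal[OF x] rel unfolding gf2_lin_indep_def by presburger
    with nz kx show False by blast
  qed
  then have "(\<Sum>x\<in>C. k x * phi x i) = (\<Sum>x\<in>C. phi x i)" by (intro sum.cong) auto
  with rel show ?thesis by simp
qed

(* Two circuits S + x and S + y of a binary matroid force x and y to have equal
   vectors, so an independent pair {x, y} is an obstruction to being binary. *)
lemma not_binary_if_twin_circuits:
  assumes cx: "circuit M (insert x S)" and cy: "circuit M (insert y S)"
    and "x \<notin> S" "y \<notin> S" "x \<noteq> y" "finite S" and pair: "snd M {x, y}"
  shows "\<not> binary M"
proof
  assume "binary M"
  then obtain phi where rep: "\<And>X. X \<subseteq> fst M \<Longrightarrow> snd M X \<longleftrightarrow> gf2_lin_indep phi X"
    unfolding binary_def by blast
  have circuit_sum: "(\<Sum>z\<in>C. phi z i) = 0" if "circuit M C" "finite C" for C i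
  proof (rule gf2_circuit_sum_zero)
    have "C \<subseteq> fst M" "\<not> snd M C" "\<And>x. x \<in> C \<Longrightarrow> snd M (C - {x})"
      using that(1) by (auto simp: circuit_def)
    then show "\<not> gf2_lin_indep phi C" "\<And>x. x \<in> C \<Longrightarrow> gf2_lin_indep phi (C - {x})"
      using rep by (meson Diff_subset order_trans)+
  qed (use that in auto)
  have "phi x i + (\<Sum>z\<in>S. phi z i) = 0" "phi y i + (\<Sum>z\<in>S. phi z i) = 0" for i
    using circuit_sum[OF cx] circuit_sum[OF cy] \<open>finite S\<close> \<open>x \<notin> S\<close> \<open>y \<notin> S\<close> by simp_all
  then have "phi x i = phi y i" for i
    by (metis add_right_cancel)
  then have pair_sum: "(\<Sum>z\<in>{x, y}. phi z i) = 0" for i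
    using \<open>x \<noteq> y\<close> by simp
  have "\<not> gf2_lin_indep phi {x, y}"
    by (rule gf2_dependent_subset[OF _ order_refl]) (use pair_sum in auto)
  moreover have "{x, y} \<subseteq> fst M" using cx cy by (auto simp: circuit_def)
  ultimately show False using rep pair by blast
qed

(* Every matroid of rank at most one is binary: elements e with {e} dependent get the
   zero vector and all other elements the same unit vector. *)
lemma binary_rank_le1:
  assumes fin: "finite E" and empty: "J {}" and small: "\<And>X. X \<subseteq> E \<Longrightarrow> J X \<Longrightarrow> card X \<le> 1"
  shows "binary (E, J)"
proof -
  define phi :: "'a \<Rightarrow> nat \<Rightarrow> bit" where "phi x i = of_bool (i = 0 \<and> J {x})" for x i
  have "J X \<longleftrightarrow> gf2_lin_indep phi X" if XE: "X \<subseteq> E" for X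
  proof (cases "card X \<le> 1")
    case True
    moreover have "finite X" using XE fin finite_subset by blast
    ultimately consider "X = {}" | x where "X = {x}"
      by (metis card_0_eq card_1_singletonE le_Suc_eq One_nat_def le_zero_eq)
    then show ?thesis
    proof cases
      case 1
      then show ?thesis using empty by (simp add: gf2_lin_indep_def)
    next
      case (2 x)
      have "gf2_lin_indep phi {x} \<longleftrightarrow> J {x}"
      proof
        assume "gf2_lin_indep phi {x}"
        then have "(\<And>i. phi x i = 0) \<Longrightarrow> False"
          using gf2_dependent_subset[of "{x}" "{x}" phi] by auto
        then obtain i where "phi x i = 1" using bit_cases by metis
        then show "J {x}" by (simp add: phi_def)
      qed (auto simp: gf2_lin_indep_def phi_def dest: spec[of _ 0])
      then show ?thesis using 2 by simp
    qed
  next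
    case False
    then have "\<not> J X" using small XE by force
    moreover have "\<not> gf2_lin_indep phi X"
    proof -
      have fX: "finite X" using XE fin finite_subset by blast
      obtain x y where xy: "x \<in> X" "y \<in> X" "x \<noteq> y"
        using False card_le_Suc0_iff_eq[OF fX] by auto
      show ?thesis
      proof (cases "J {x} \<and> J {y}")
        case True
        then have "phi x = phi y" by (simp add: phi_def fun_eq_iff)
        then have "(\<Sum>z\<in>{x, y}. phi z i) = 0" for i using xy(3) by simp
        then show ?thesis using gf2_dependent_subset[OF fX, of "{x, y}"] xy by auto
      next
        case False
        then obtain z where "z \<in> X" "\<not> J {z}" using xy by auto
        then show ?thesis using gf2_dependent_subset[OF fX, of "{z}"] by (auto simp: phi_def)
      qed
    qed
    ultimately show ?thesis by simp
  qed
  then show ?thesis unfolding binary_def by auto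
qed

(* A representation with S as its only circuit: the element m of S gets the sum of
   the unit vectors of the other elements of S, every other element x gets e_x. *)
definition unique_circuit_rep :: "nat set \<Rightarrow> nat \<Rightarrow> nat \<Rightarrow> nat \<Rightarrow> bit" where
  "unique_circuit_rep S m x i = (if x = m then of_bool (i \<in> S - {m}) else of_bool (i = x))"

lemma unique_circuit_rep_sum:
  assumes "finite X"
  shows "(\<Sum>x\<in>X. c x * unique_circuit_rep S m x i) =
    (if m \<in> X \<and> i \<in> S - {m} then c m else 0) + (if i \<in> X - {m} then c i else 0)"
proof -
  have unit: "(\<Sum>x\<in>X - {m}. c x * unique_circuit_rep S m x i) = (if i \<in> X - {m} then c i else 0)"
  proof -
    have "(\<Sum>x\<in>X - {m}. c x * unique_circuit_rep S m x i) = (\<Sum>x\<in>X - {m}. if x = i then c x else 0)"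
      by (rule sum.cong) (auto simp: unique_circuit_rep_def)
    then show ?thesis using assms by (simp add: sum.delta')
  qed
  show ?thesis
  proof (cases "m \<in> X")
    case True
    then show ?thesis
      using sum.remove[OF assms True, of "\<lambda>x. c x * unique_circuit_rep S m x i"] unit
      by (simp add: unique_circuit_rep_def)
  next
    case False
    then show ?thesis using unit by simp
  qed
qed

lemma gf2_unique_circuit_rep:
  assumes fX: "finite X" and "finite S" and m: "m \<in> S"
  shows "gf2_lin_indep (unique_circuit_rep S m) X \<longleftrightarrow> \<not> S \<subseteq> X"
proof
  assume indep: "gf2_lin_indep (unique_circuit_rep S m) X"
  show "\<not> S \<subseteq> X"
  proof
    assume SX: "S \<subseteq> X"
    have "(\<Sum>x\<in>S. 1 * unique_circuit_rep S m x i) = 0" for i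
      using unique_circuit_rep_sum[OF \<open>finite S\<close>, of "\<lambda>_. 1"] m by auto
    then show False using gf2_dependent_subset[OF fX SX] m indep by auto
  qed
next
  assume notsub: "\<not> S \<subseteq> X"
  show "gf2_lin_indep (unique_circuit_rep S m) X" unfolding gf2_lin_indep_def
  proof (intro allI impI)
    fix c assume rel: "\<forall>i. (\<Sum>x\<in>X. c x * unique_circuit_rep S m x i) = 0"
    have cm: "c m = 0" if "m \<in> X"
    proof -
      obtain i where "i \<in> S" "i \<notin> X" using notsub by blast
      moreover from this have "i \<noteq> m" using that by blast
      ultimately show ?thesis using rel unique_circuit_rep_sum[OF fX, of c S m i] that by auto
    qed
    show "\<forall>x\<in>X. c x = 0"
    proof
      fix x assume "x \<in> X"
      then show "c x = 0" using cm rel unique_circuit_rep_sum[OF fX, of c S m x]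
        by (cases "x = m") (auto split: if_splits)
    qed
  qed
qed

lemma binary_unique_circuit:
  fixes F :: "nat set"
  assumes fin: "finite F" and SF: "S \<subseteq> F" "S \<noteq> {}"
    and I: "\<And>X. X \<subseteq> F \<Longrightarrow> I X \<longleftrightarrow> \<not> S \<subseteq> X"
  shows "binary (F, I)"
proof -
  obtain m where "m \<in> S" using SF by blast
  moreover have "finite S" using SF fin finite_subset by blast
  ultimately have "\<forall>X \<subseteq> F. I X \<longleftrightarrow> gf2_lin_indep (unique_circuit_rep S m) X"
    using I gf2_unique_circuit_rep fin finite_subset by metis
  then show ?thesis unfolding binary_def by auto
qed

lemma basis_exists:
  assumes "finite C" "I {}"
  shows "\<exists>B. basis_of I B C"
proof -
  let ?P = "\<lambda>B. B \<subseteq> C \<and> I B"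
  have "\<forall>B. ?P B \<longrightarrow> card B < Suc (card C)"
    using assms(1) by (simp add: card_mono le_imp_less_Suc)
  from ex_has_greatest_nat[of ?P "{}", OF _ this] assms(2)
  obtain B where B: "?P B" "\<And>B'. ?P B' \<Longrightarrow> card B' \<le> card B" by auto
  have "finite B" using B(1) assms(1) finite_subset by blast
  have "\<not> I (insert x B)" if x: "x \<in> C - B" for x
  proof
    assume "I (insert x B)"
    then have "card (insert x B) \<le> card B" using B(1) x by (intro B(2)) blast
    then show False using \<open>finite B\<close> x by simp
  qed
  then show ?thesis using B(1) unfolding basis_of_def by blast
qed

lemma basis_nonempty:
  assumes "basis_of I B C" "c \<in> C" "I {c}"
  shows "B \<noteq> {}"
  using assms unfolding basis_of_def by auto

lemma contract_simps:
  "fst (contract M C) = fst M - C"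
  "snd (contract M C) X \<longleftrightarrow> X \<subseteq> fst M - C \<and> (\<exists>B. basis_of (snd M) B (C \<inter> fst M) \<and> snd M (X \<union> B))"
  by (simp_all add: contract_def)

lemma contract_indep_empty:
  assumes "finite (C \<inter> fst M)" "snd M {}"
  shows "snd (contract M C) {}"
  using basis_exists[of "C \<inter> fst M" "snd M"] assms unfolding contract_def basis_of_def by auto

lemma contract_empty:
  assumes "\<And>X. snd M X \<Longrightarrow> X \<subseteq> fst M" "snd M {}"
  shows "contract M {} = M"
proof -
  have "basis_of (snd M) B {} \<longleftrightarrow> B = {}" for B
    using assms(2) unfolding basis_of_def by auto
  then have "snd (contract M {}) X \<longleftrightarrow> snd M X" for X
    using assms(1) unfolding contract_def by auto
  then show ?thesis by (simp add: prod_eq_iff fun_eq_iff contract_def)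
qed

lemma contract_single:
  assumes "snd M {e}" "e \<in> fst M"
  shows "contract M {e} = (fst M - {e}, \<lambda>X. X \<subseteq> fst M - {e} \<and> snd M (X \<union> {e}))"
proof -
  have "basis_of (snd M) B ({e} \<inter> fst M) \<longleftrightarrow> B = {e}" for B
    using assms unfolding basis_of_def by (auto simp: subset_singleton_iff)
  then show ?thesis unfolding contract_def by auto
qed

lemma delete_delete: "delete (delete M D) D' = delete M (D \<union> D')"
  unfolding delete_def by (auto simp: fun_eq_iff)

lemma binary_delete:
  assumes "binary M"
  shows "binary (delete M D)"
proof -
  obtain phi where "\<forall>X \<subseteq> fst M. snd M X \<longleftrightarrow> gf2_lin_indep phi X"
    using assms unfolding binary_def by blast
  then have "\<forall>X \<subseteq> fst (delete M D). snd (delete M D) X \<longleftrightarrow> gf2_lin_indep phi X"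
    unfolding delete_def by auto
  then show ?thesis unfolding binary_def by blast
qed

definition simple_rank_le3 :: "'a matroid \<Rightarrow> bool" where
  "simple_rank_le3 M \<longleftrightarrow> finite (fst M) \<and> (\<forall>X. snd M X \<longrightarrow> X \<subseteq> fst M \<and> card X \<le> 3) \<and>
     (\<forall>X \<subseteq> fst M. card X \<le> 2 \<longrightarrow> snd M X)"

(* A proper minor obtained by deletion alone: deleting e from it gives a deletion of
   the binary matroid M minus {d, e}. *)
lemma delete_minor_binary:
  assumes M: "simple_rank_le3 M" and "d \<in> D" "e \<notin> D" and bin: "binary (delete M {d, e})"
  shows "binary (delete (contract (delete M D) {}) {e})"
proof -
  have "contract (delete M D) {} = delete M D"
    using M by (intro contract_empty) (auto simp: delete_def simple_rank_le3_def)
  moreover have "delete (delete M {d, e}) (D \<union> {e}) = delete (delete M D) {e}"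
    using \<open>d \<in> D\<close> by (simp add: delete_delete insert_absorb Un_commute)
  ultimately show ?thesis using binary_delete[OF bin] by metis
qed

lemma delete_simps:
  "fst (delete M D) = fst M - D"
  "snd (delete M D) X \<longleftrightarrow> X \<subseteq> fst M - D \<and> snd M X"
  by (simp_all add: delete_def)

lemma delete_contract_indep:
  assumes "C \<subseteq> fst M" "C \<inter> D = {}"
  shows "snd (contract (delete M D) C) Y \<longleftrightarrow>
    Y \<subseteq> fst M - D - C \<and> (\<exists>B. basis_of (snd (delete M D)) B C \<and> snd (delete M D) (Y \<union> B))"
proof -
  have "C \<inter> (fst M - D) = C" using assms by auto
  then show ?thesis by (simp add: contract_simps delete_simps)
qed

(* The sets contracted on the way from M to M \ D / C / e are a basis B of C and the
   part B' of {e} that stays independent over it.  In a simple matroid they have at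
   least two elements: B is nonempty as singletons are independent, and if B' is
   empty then e + B is dependent, so B has at least two elements. *)
lemma contracted_basis_card_ge2:
  assumes M: "simple_rank_le3 M" and CD: "C \<subseteq> fst M" "C \<inter> D = {}" "C \<noteq> {}"
    and e: "e \<in> fst M" "e \<notin> C" "e \<notin> D"
    and B: "basis_of (snd (delete M D)) B C"
    and B': "basis_of (snd (contract (delete M D) C)) B' {e}"
  shows "2 \<le> card (B' \<union> B)"
proof -
  have small: "\<And>Y. Y \<subseteq> fst M - D \<Longrightarrow> card Y \<le> 2 \<Longrightarrow> snd (delete M D) Y"
    using M by (auto simp: simple_rank_le3_def delete_simps)
  have BC: "B \<subseteq> C" "B' \<subseteq> {e}" using B B' by (auto simp: basis_of_def)
  have fB: "finite B" using BC(1) CD(1) M by (meson finite_subset simple_rank_le3_def)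
  have "e \<notin> B" using BC e by auto
  show ?thesis
  proof (cases "e \<in> B'")
    case True
    obtain c where "c \<in> C" using CD by blast
    moreover have "snd (delete M D) {c}" using \<open>c \<in> C\<close> CD by (intro small) auto
    ultimately have "B \<noteq> {}" using basis_nonempty[OF B] by blast
    then have "B' \<union> B = insert e B" "card B \<ge> 1" using True BC fB by (auto simp: Suc_le_eq)
    then show ?thesis using fB \<open>e \<notin> B\<close> by simp
  next
    case False
    then have "B' = {}" using BC by auto
    then have "\<not> snd (contract (delete M D) C) {e}" using B' by (auto simp: basis_of_def)
    then have "\<not> snd (delete M D) ({e} \<union> B)"
      using B e by (auto simp: delete_contract_indep[OF CD(1,2)])
    moreover have "insert e B \<subseteq> fst M - D" using BC CD e by blast
    ultimately have "\<not> card (insert e B) \<le> 2" using small by auto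
    then show ?thesis using \<open>B' = {}\<close> fB \<open>e \<notin> B\<close> by simp
  qed
qed

(* A proper minor that contracts a nonempty set C has rank at most one after
   contracting one more element: its independent sets together with the at least
   two contracted basis elements are independent in the rank-3 matroid M. *)
lemma contract_contract_rank_le1:
  assumes M: "simple_rank_le3 M" and CD: "C \<subseteq> fst M" "C \<inter> D = {}" "C \<noteq> {}"
    and e: "e \<in> fst M" "e \<notin> C" "e \<notin> D"
    and X: "snd (contract (contract (delete M D) C) {e}) X"
  shows "card X \<le> 1"
proof -
  let ?N = "contract (delete M D) C"
  have fin: "finite (fst M)" and rank: "\<And>Y. snd M Y \<Longrightarrow> card Y \<le> 3"
    using M by (auto simp: simple_rank_le3_def)
  have "{e} \<inter> fst ?N = {e}" using e by (auto simp: contract_simps delete_simps)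
  then obtain B' where B': "basis_of (snd ?N) B' {e}" "snd ?N (X \<union> B')" "X \<subseteq> fst M - D - C - {e}"
    using X by (auto simp: contract_simps delete_simps)
  then obtain B where B: "basis_of (snd (delete M D)) B C" "snd (delete M D) (X \<union> B' \<union> B)"
    by (auto simp: delete_contract_indep[OF CD(1,2)])
  have BC: "B \<subseteq> C" "B' \<subseteq> {e}" using B(1) B'(1) by (auto simp: basis_of_def)
  have "card (X \<union> (B' \<union> B)) \<le> 3" using B(2) rank by (auto simp: delete_simps Un_assoc)
  moreover have "X \<inter> (B' \<union> B) = {}" using B'(3) BC by auto
  moreover have "finite X" "finite (B' \<union> B)"
    using B'(3) BC CD(1) fin by (meson Diff_subset finite_subset subset_trans finite_Un finite.intros)+
  ultimately show ?thesis
    using contracted_basis_card_ge2[OF M CD e B(1) B'(1)] card_Un_disjoint[of X "B' \<union> B"] by simp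
qed

lemma simple_rank_le3_proper_minors_in_Z:
  assumes M: "simple_rank_le3 M"
    and bin: "\<And>d e. d \<in> fst M \<Longrightarrow> e \<in> fst M \<Longrightarrow> d \<noteq> e \<Longrightarrow> binary (delete M {d, e})"
    and "proper_minor N M"
  shows "in_Z N"
proof -
  obtain C D where CD: "C \<subseteq> fst M" "D \<subseteq> fst M" "C \<inter> D = {}" "C \<union> D \<noteq> {}"
    and N: "N = contract (delete M D) C"
    using assms(3) unfolding proper_minor_def by blast
  have fin: "finite (fst M)" and empty: "snd M {}" using M by (auto simp: simple_rank_le3_def)
  have fstN: "fst N = fst M - D - C" by (simp add: N contract_simps delete_def)
  show ?thesis unfolding in_Z_def
  proof
    fix e assume "e \<in> fst N"
    then have e: "e \<in> fst M" "e \<notin> C" "e \<notin> D" using fstN by auto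
    show "binary (delete N {e}) \<or> binary (contract N {e})"
    proof (cases "C = {}")
      case True
      then obtain d where "d \<in> D" using CD(4) by blast
      then have "binary (delete M {d, e})" using bin CD(2) e by blast
      then show ?thesis using delete_minor_binary[OF M \<open>d \<in> D\<close> e(3)] N True by simp
    next
      case False
      have "snd N {}" unfolding N
        using fin empty by (intro contract_indep_empty) (auto simp: delete_def)
      then have "snd (contract N {e}) {}" by (intro contract_indep_empty) auto
      moreover have "finite (fst (contract N {e}))" using fin fstN by (simp add: contract_simps)
      ultimately have "binary (fst (contract N {e}), snd (contract N {e}))"
        using contract_contract_rank_le1[OF M CD(1,3) False e] N by (intro binary_rank_le1) auto
      then show ?thesis by simp
    qed
  qed
qed

definition rank3_paving :: "'a set \<Rightarrow> 'a set set \<Rightarrow> 'a matroid" where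
  "rank3_paving E T = (E, \<lambda>X. X \<subseteq> E \<and> card X \<le> 3 \<and> X \<notin> T)"

definition triangle_system :: "'a set set \<Rightarrow> bool" where
  "triangle_system T \<longleftrightarrow> (\<forall>t\<in>T. card t = 3) \<and> (\<forall>t\<in>T. \<forall>t'\<in>T. t \<noteq> t' \<longrightarrow> card (t \<inter> t') \<le> 1)"

lemma rank3_paving_simps [simp]:
  "fst (rank3_paving E T) = E"
  "snd (rank3_paving E T) X \<longleftrightarrow> X \<subseteq> E \<and> card X \<le> 3 \<and> X \<notin> T"
  by (simp_all add: rank3_paving_def)

lemma rank3_paving_indep_subset:
  assumes "finite E" "\<forall>t\<in>T. card t = 3" "snd (rank3_paving E T) Y" "X \<subseteq> Y"
  shows "snd (rank3_paving E T) X"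
proof -
  have fY: "finite Y" using assms(1,3) finite_subset by auto
  have c: "card X \<le> card Y" using card_mono[OF fY assms(4)] .
  have "X \<notin> T"
  proof
    assume "X \<in> T"
    then have "card X = card Y" using assms(2,3) c by auto
    then have "X = Y" using card_subset_eq[OF fY assms(4)] by simp
    then show False using \<open>X \<in> T\<close> assms(3) by simp
  qed
  then show ?thesis using assms(3,4) c by auto
qed

(* Exchange fails only if X is a pair and every y in Y - X closes a triangle on X;
   two such triangles would share the pair X, and a single one would equal Y. *)
lemma rank3_paving_exchange:
  assumes fE: "finite E" and T: "triangle_system T"
    and X: "snd (rank3_paving E T) X" and Y: "snd (rank3_paving E T) Y" and less: "card X < card Y"
  shows "\<exists>y\<in>Y - X. snd (rank3_paving E T) (insert y X)"
proof (rule ccontr)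
  assume none: "\<not> (\<exists>y\<in>Y - X. snd (rank3_paving E T) (insert y X))"
  have fX: "finite X" using X fE finite_subset by auto
  have cY: "card Y \<le> 3" using Y by simp
  have blocked: "insert y X \<in> T \<and> card X = 2" if "y \<in> Y - X" for y
  proof -
    have "card (insert y X) \<le> 3" using that fX less cY by simp
    then have "insert y X \<in> T" using none that X Y by auto
    then show ?thesis using T fX that by (auto simp: triangle_system_def)
  qed
  obtain y1 where y1: "y1 \<in> Y - X"
    using card_mono[OF fX, of Y] less by (metis Diff_eq_empty_iff ex_in_conv not_le)
  then have cX: "card X = 2" using blocked by blast
  show False
  proof (cases "Y - X \<subseteq> {y1}")
    case True
    then have "Y \<subseteq> insert y1 X" by blast
    moreover have "card (insert y1 X) = card Y" using cX cY less fX y1 by simp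
    ultimately have "Y = insert y1 X" using card_seteq[of "insert y1 X" Y] fX by simp
    then show False using blocked[OF y1] Y by simp
  next
    case False
    then obtain y2 where y2: "y2 \<in> Y - X" "y2 \<noteq> y1" by blast
    have "X \<subseteq> insert y1 X \<inter> insert y2 X" by blast
    then have "2 \<le> card (insert y1 X \<inter> insert y2 X)"
      using cX card_mono[of "insert y1 X \<inter> insert y2 X" X] fX by simp
    moreover have "insert y1 X \<noteq> insert y2 X" using y1 y2 by blast
    ultimately show False using blocked[OF y1] blocked[OF y2(1)] T
      unfolding triangle_system_def by fastforce
  qed
qed

lemma rank3_paving_matroid:
  assumes "finite E" "triangle_system T"
  shows "matroid (rank3_paving E T)"
  unfolding matroid_def Let_def
proof (intro conjI allI impI)
  have T3: "\<forall>t\<in>T. card t = 3" using assms(2) by (simp add: triangle_system_def)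
  then show "snd (rank3_paving E T) {}" by force
  show "\<And>X Y. snd (rank3_paving E T) Y \<and> X \<subseteq> Y \<Longrightarrow> snd (rank3_paving E T) X"
    using rank3_paving_indep_subset[OF assms(1) T3] by blast
next
  fix X Y
  assume "snd (rank3_paving E T) X \<and> snd (rank3_paving E T) Y \<and> card X < card Y"
  then show "\<exists>y\<in>Y - X. snd (rank3_paving E T) (insert y X)"
    using rank3_paving_exchange[OF assms] by blast
qed (use assms in auto)

lemma rank3_paving_simple:
  assumes "finite E" "\<forall>t\<in>T. card t = 3"
  shows "simple_rank_le3 (rank3_paving E T)"
  using assms unfolding simple_rank_le3_def by force

lemma card_le3_if_not_superset:
  assumes "finite F" "card F = 4" "X \<subseteq> F" "\<not> F \<subseteq> X"
  shows "card X \<le> 3"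
  using psubset_card_mono[OF assms(1), of X] assms(2-4) by fastforce

(* A four-point set F containing a triangle t: t is the only circuit inside F, since
   another triangle inside F would share two points with t. *)
lemma rank3_paving_four_point_triangle:
  assumes "finite E" and T: "triangle_system T" and F: "F \<subseteq> E" "card F = 4"
    and t: "t \<in> T" "t \<subseteq> F" and X: "X \<subseteq> F"
  shows "snd (rank3_paving E T) X \<longleftrightarrow> \<not> t \<subseteq> X"
proof
  have fF: "finite F" using F \<open>finite E\<close> finite_subset by blast
  have ct: "card t = 3" using t T by (simp add: triangle_system_def)
  {
    assume "snd (rank3_paving E T) X"
    then show "\<not> t \<subseteq> X"
      using card_seteq[of X t] fF X ct t(1) finite_subset by fastforce
  }
  assume nt: "\<not> t \<subseteq> X"
  then have cX: "card X \<le> 3" using card_le3_if_not_superset[OF fF F(2) X] t by blast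
  have "X \<notin> T"
  proof
    assume "X \<in> T"
    then have "card X = 3" "card (X \<inter> t) \<le> 1"
      using T t nt unfolding triangle_system_def by auto
    moreover have "card (X \<union> t) \<le> 4" using card_mono[OF fF] X t F by simp
    moreover have "finite X" "finite t" using fF X t finite_subset by auto
    ultimately show False using card_Un_Int[of X t] ct by simp
  qed
  then show "snd (rank3_paving E T) X" using cX X F by auto
qed

lemma rank3_paving_four_point_free:
  assumes "finite F" "card F = 4" "F \<subseteq> E" "\<forall>t\<in>T. \<not> t \<subseteq> F" and X: "X \<subseteq> F"
  shows "snd (rank3_paving E T) X \<longleftrightarrow> \<not> F \<subseteq> X"
proof
  assume "snd (rank3_paving E T) X"
  then have "card X \<le> 3" by simp
  then show "\<not> F \<subseteq> X" using X assms(2) subset_antisym by fastforce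
next
  assume "\<not> F \<subseteq> X"
  then show "snd (rank3_paving E T) X"
    using card_le3_if_not_superset[OF assms(1,2) X] assms(3,4) X by auto
qed

lemma rank3_paving_four_point_circuit:
  assumes fE: "finite E" and T: "triangle_system T" and F: "F \<subseteq> E" "card F = 4"
  shows "\<exists>S\<subseteq>F. S \<noteq> {} \<and> (\<forall>X\<subseteq>F. snd (rank3_paving E T) X \<longleftrightarrow> \<not> S \<subseteq> X)"
proof (cases "\<exists>t\<in>T. t \<subseteq> F")
  case True
  then obtain t where t: "t \<in> T" "t \<subseteq> F" by blast
  have "t \<noteq> {}" using t T by (auto simp: triangle_system_def)
  moreover have "\<forall>X\<subseteq>F. snd (rank3_paving E T) X \<longleftrightarrow> \<not> t \<subseteq> X"
    using rank3_paving_four_point_triangle[OF fE T F t] by simp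
  ultimately show ?thesis using t(2) by (intro exI[of _ t] conjI)
next
  case False
  then have "\<forall>t\<in>T. \<not> t \<subseteq> F" by simp
  moreover have "finite F" using F fE finite_subset by blast
  ultimately have "\<forall>X\<subseteq>F. snd (rank3_paving E T) X \<longleftrightarrow> \<not> F \<subseteq> X"
    using rank3_paving_four_point_free[OF _ F(2,1)] by simp
  moreover have "F \<noteq> {}" using F(2) by auto
  ultimately show ?thesis by (intro exI[of _ F] conjI order_refl)
qed

lemma rank3_paving_delete_pair_binary:
  fixes E :: "nat set"
  assumes "finite E" "card E = 6" "triangle_system T" "d \<in> E" "e \<in> E" "d \<noteq> e"
  shows "binary (delete (rank3_paving E T) {d, e})"
proof -
  let ?F = "E - {d, e}"
  have "card ?F = 4" using assms by (simp add: card_Diff_subset)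
  then obtain S where S: "S \<subseteq> ?F" "S \<noteq> {}" "\<forall>X\<subseteq>?F. snd (rank3_paving E T) X \<longleftrightarrow> \<not> S \<subseteq> X"
    using rank3_paving_four_point_circuit[OF assms(1,3), of ?F] by blast
  have "delete (rank3_paving E T) {d, e} = (?F, \<lambda>X. X \<subseteq> ?F \<and> snd (rank3_paving E T) X)"
    by (simp add: delete_def)
  moreover have "binary (?F, \<lambda>X. X \<subseteq> ?F \<and> snd (rank3_paving E T) X)"
    using S assms(1) by (intro binary_unique_circuit[of ?F S]) auto
  ultimately show ?thesis by simp
qed

lemma rank3_paving_six_excluded_minor:
  fixes E :: "nat set"
  assumes "finite E" "card E = 6" "triangle_system T" "\<not> in_Z (rank3_paving E T)"
  shows "excluded_minor_Z (rank3_paving E T)"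
  unfolding excluded_minor_Z_def
proof (intro conjI allI impI)
  show "matroid (rank3_paving E T)" using assms(1,3) by (rule rank3_paving_matroid)
  show "\<not> in_Z (rank3_paving E T)" by fact
  fix N assume "proper_minor N (rank3_paving E T)"
  moreover have "simple_rank_le3 (rank3_paving E T)"
    using assms(3) unfolding triangle_system_def by (intro rank3_paving_simple assms(1)) blast
  ultimately show "in_Z N"
    using rank3_paving_delete_pair_binary[OF assms(1-3)]
    by (intro simple_rank_le3_proper_minors_in_Z) auto
qed

lemma not_in_Z_if_neither_minor_binary:
  assumes "e \<in> fst M" "\<not> binary (delete M {e})" "\<not> binary (contract M {e})"
  shows "\<not> in_Z M"
  using assms unfolding in_Z_def by blast

(* U36 / 5 and P6 / 5 contain the circuits {0,1,3}, {0,1,4}, and U36 \ 5 and P6 \ 5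
   the circuits {0,1,3,4}, {0,2,3,4}. *)
lemma U36_not_in_Z: "\<not> in_Z U36"
proof (rule not_in_Z_if_neither_minor_binary[of 5])
  show "\<not> binary (delete U36 {5})"
    by (rule not_binary_if_twin_circuits[of _ 1 "{0,3,4}" 2])
      (simp_all add: circuit_def delete_def U36_def insert_Diff_if, (code_simp+)?)
  show "\<not> binary (contract U36 {5})"
    by (rule not_binary_if_twin_circuits[of _ 3 "{0,1}" 4])
      (simp_all add: contract_single U36_def circuit_def insert_Diff_if, (code_simp+)?)
qed (simp add: U36_def)

lemma P6_not_in_Z: "\<not> in_Z P6"
proof (rule not_in_Z_if_neither_minor_binary[of 5])
  show "\<not> binary (delete P6 {5})"
    by (rule not_binary_if_twin_circuits[of _ 1 "{0,3,4}" 2])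
      (simp_all add: circuit_def delete_def P6_def insert_Diff_if, (code_simp+)?)
  show "\<not> binary (contract P6 {5})"
    by (rule not_binary_if_twin_circuits[of _ 3 "{0,1}" 4])
      (simp_all add: contract_single P6_def circuit_def insert_Diff_if, (code_simp+)?)
qed (simp add: P6_def)

(* Q6 \ 0 contains the circuits {1,2,3,5}, {1,2,4,5}, and Q6 / 0 the circuits
   {1,3,4}, {1,3,5}. *)
lemma Q6_not_in_Z: "\<not> in_Z Q6"
proof (rule not_in_Z_if_neither_minor_binary[of 0])
  show "\<not> binary (delete Q6 {0})"
    by (rule not_binary_if_twin_circuits[of _ 3 "{1,2,5}" 4])
      (simp_all add: circuit_def delete_def Q6_def insert_Diff_if, (code_simp+)?)
  show "\<not> binary (contract Q6 {0})"
    by (rule not_binary_if_twin_circuits[of _ 4 "{1,3}" 5])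
      (simp_all add: contract_single Q6_def circuit_def insert_Diff_if, (code_simp+)?)
qed (simp add: Q6_def)

lemma U36_rank3_paving: "U36 = rank3_paving {0..5} {}"
  by (simp add: U36_def rank3_paving_def)

lemma P6_rank3_paving: "P6 = rank3_paving {0..5} {{0,1,2}}"
  by (simp add: P6_def rank3_paving_def)

lemma Q6_rank3_paving: "Q6 = rank3_paving {0..5} {{0,1,2}, {2,3,4}}"
  by (simp add: Q6_def rank3_paving_def conj_commute)

theorem lemma2p11:
  shows "excluded_minor_Z Q6 \<and> excluded_minor_Z P6 \<and> excluded_minor_Z U36"
proof -
  have six: "finite {0..5::nat}" "card {0..5::nat} = 6" by simp_all
  have "triangle_system {{0,1,2}, {2,3,4::nat}}" "triangle_system {{0,1,2::nat}}"
    "triangle_system ({} :: nat set set)"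
    by (simp_all add: triangle_system_def)
  then show ?thesis
    using rank3_paving_six_excluded_minor[OF six] Q6_not_in_Z P6_not_in_Z U36_not_in_Z
    unfolding Q6_rank3_paving P6_rank3_paving U36_rank3_paving by blast
qed

end
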